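(* Assume $f$ and all $g_i$ are $C^1$, and take $w_i$ to be the constant functions $w_i=\frac1{h_k}\int_{t_k}^{t_{k+1}}v_i(t)\,dt$ on $[t_k,t_{k+1}]$. Then \[ \|x(t_{k+1})-y(t_{k+1})\|\le h_k^2\left(\frac{(K+K')L'}{3}+2K'(L+L')\,\frac{e^{\Lambda h_k}-1}{\Lambda h_k}\right). \]
   Context: Setting: for $m\ge 1$ consider on $\mathbb{R}^n$ the input-affine system $\dot x(t)=f(x(t))+\sum_{i=1}^m g_i(x(t))v_i(t)$, where $f,g_i:\mathbb{R}^n\to\mathbb{R}^n$ and each $v_i$ is a Lebesgue measurable function with $|v_i(t)|\le V_i$ for some $V_i>0$. Fix a time step $[t_k,t_{k+1}]$ with $h_k=t_{k+1}-t_k>0$ and $t_{k+1/2}=(t_k+t_{k+1})/2$, and let $x$ be a solution on $[t_k,t_{k+1}]$. Given real-valued bounded measurable functions $w_i$ on $[t_k,t_{k+1}]$, let $y$ be the solution of the approximate system $\dot y(t)=f(y(t))+\sum_{i=1}^m g_i(y(t))w_i(t)$ with $y(t_k)=x(t_k)$. Norms: $\|x\|=\max_j|x_j|$ on $\mathbb{R}^n$, the induced matrix norm $\|Q\|=\max_k\sum_i|q_{ki}|$, and the logarithmic norm $\lambda(Q)=\max_k\big(q_{kk}+\sum_{i\neq k}|q_{ki}|\big)$. Standing bounds: there is a convex set $B$ containing $x(t)$ and $y(t)$ for all $t\in[t_k,t_{k+1}]$ on which $\|f\|\le K$, $\|g_i\|\le K_i$, $\|Df\|\le L$, $\|Dg_i\|\le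 L_i$, $\|D^2f\|\le H$, $\|D^2g_i\|\le H_i$ (whenever these derivatives exist; $D$ is the Jacobian, $D^2$ the second derivative) and $\lambda(Df)\le\Lambda$, with $\Lambda\neq 0$. Put $K'=\sum_{i=1}^m V_iK_i$, $L'=\sum_{i=1}^m V_iL_i$, $H'=\sum_{i=1}^m V_iH_i$. *)

theory Defs
  imports "HOL-Analysis.Analysis"
begin

definition maxnorm :: "real^'n \<Rightarrow> real" where
  "maxnorm x = Max (range (\<lambda>j. \<bar>x $ j\<bar>))"

text \<open>Induced matrix norm: maximal absolute row sum, Q $ k $ i = q_{ki}.\<close>
definition matnorm :: "real^'n^'n \<Rightarrow> real" where
  "matnorm Q = Max (range (\<lambda>k. \<Sum>i\<in>UNIV. \<bar>Q $ k $ i\<bar>))"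

definition lognorm :: "real^'n^'n \<Rightarrow> real" where
  "lognorm Q = Max (range (\<lambda>k. Q $ k $ k + (\<Sum>i\<in>UNIV - {k}. \<bar>Q $ k $ i\<bar>)))"

end

theory Submission
  imports Defs
begin

(* The intermediate curve
   xa(t) = x(tk) + integral over [tk, t] of f(x) + sum_i W_i g_i(x), i.e. the averaged field
   evaluated along the exact trajectory, splits the error as x - y = (x - xa) + (xa - y).
   - x - xa integrates (v_i - W_i) against the Lipschitz functions g_i(x(s)); an averaging lemma,
     proved by summation by parts on uniform partitions, bounds it by (K + K') L' h^2 / 3.
   - The max norms of x - y and of xa - y have upper right Dini derivatives at most Lambda times
     the norm plus a perturbation, by a row-wise mean value argument for f and the bound Lambda
     on the logarithmic norm of Df.  A comparison principle then yields
     |x - y| <= 2 K' phi(t - tk) and |xa - y| <= 2 K' (L + L') (t - tk) phi(t - tk), where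
     phi(s) = (exp(Lambda s) - 1) / Lambda. *)

text \<open>The max norm of the statement is the library's infnorm on \<open>real^'n\<close>; from here on all
  vector estimates are phrased with infnorm, so that the library's triangle inequality,
  homogeneity and continuity results apply.\<close>
lemma maxnorm_eq_infnorm: "maxnorm x = infnorm (x::real^'n)"
proof -
  have "{\<bar>x $ i\<bar> |i. i \<in> UNIV} = range (\<lambda>j. \<bar>x $ j\<bar>)" by auto
  then show ?thesis
    unfolding maxnorm_def infnorm_cart by (simp add: cSup_eq_Max)
qed

lemma infnorm_le_cartI:
  assumes "\<And>j. \<bar>x $ j\<bar> \<le> c"
  shows "infnorm (x::real^'n) \<le> c"
  using assms unfolding maxnorm_eq_infnorm[symmetric] maxnorm_def by (subst Max_le_iff) auto

lemma infnorm_sum: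
  fixes F :: "'i \<Rightarrow> 'a::euclidean_space"
  shows "infnorm (\<Sum>i\<in>I. F i) \<le> (\<Sum>i\<in>I. infnorm (F i))"
proof (cases "finite I")
  case True
  then show ?thesis
    by (induction I rule: finite_induct) (auto simp: infnorm_0 intro: order_trans[OF infnorm_triangle])
next
  case False
  then show ?thesis by (simp add: infnorm_0)
qed

lemma infnorm_diff_le: "infnorm (a - b) \<le> infnorm a + infnorm b"
  using infnorm_triangle[of a "- b"] by (simp add: infnorm_neg)

lemma infnorm_sum_scaleR_le:
  assumes "\<And>i. i \<in> I \<Longrightarrow> \<bar>c i\<bar> \<le> a i" and "\<And>i. i \<in> I \<Longrightarrow> infnorm (z i) \<le> b i"
  shows "infnorm (\<Sum>i\<in>I. c i *\<^sub>R z i) \<le> (\<Sum>i\<in>I. a i * b i)"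
proof -
  have "infnorm (\<Sum>i\<in>I. c i *\<^sub>R z i) \<le> (\<Sum>i\<in>I. \<bar>c i\<bar> * infnorm (z i))"
    using infnorm_sum[of "\<lambda>i. c i *\<^sub>R z i" I] by (simp add: infnorm_mul)
  also have "\<dots> \<le> (\<Sum>i\<in>I. a i * b i)"
    using assms by (intro sum_mono mult_mono) (auto intro: infnorm_pos_le order_trans[OF abs_ge_zero])
  finally show ?thesis .
qed

lemma abs_weighted_sum_le_infnorm:
  "\<bar>\<Sum>i\<in>S. q i * w $ i\<bar> \<le> (\<Sum>i\<in>S. \<bar>q i\<bar>) * infnorm (w::real^'n)"
proof -
  have "\<bar>\<Sum>i\<in>S. q i * w $ i\<bar> \<le> (\<Sum>i\<in>S. \<bar>q i\<bar> * \<bar>w $ i\<bar>)"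
    by (metis (no_types, lifting) abs_mult sum.cong sum_abs)
  also have "\<dots> \<le> (\<Sum>i\<in>S. \<bar>q i\<bar> * infnorm w)"
    by (intro sum_mono mult_left_mono component_le_infnorm_cart) simp
  finally show ?thesis by (simp add: sum_distrib_right)
qed

lemma matnorm_row: "(\<Sum>i\<in>UNIV. \<bar>Q $ k $ i\<bar>) \<le> matnorm Q"
  unfolding matnorm_def by (rule Max_ge) auto

lemma matnorm_nonneg: "0 \<le> matnorm Q"
  using matnorm_row[of Q undefined] by (meson order_trans sum_nonneg abs_ge_zero)

lemma lognorm_row: "Q $ k $ k + (\<Sum>i\<in>UNIV - {k}. \<bar>Q $ k $ i\<bar>) \<le> lognorm Q"
  unfolding lognorm_def by (rule Max_ge) auto

text \<open>Mean value theorem for one component of a differentiable map along a segment in a convex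
  set; the intermediate point may depend on the component.\<close>
lemma row_mean_value:
  fixes F :: "real^'n \<Rightarrow> real^'n" and DF :: "real^'n \<Rightarrow> real^'n^'n"
  assumes der: "\<And>z. (F has_derivative (\<lambda>u. DF z *v u)) (at z)"
    and cvx: "convex B" and a: "a \<in> B" and b: "b \<in> B"
  obtains \<xi> where "\<xi> \<in> B" "(F a - F b) $ k = (\<Sum>i\<in>UNIV. DF \<xi> $ k $ i * (a - b) $ i)"
proof -
  define p where "p s = b + s *\<^sub>R (a - b)" for s
  define \<phi> where "\<phi> s = F (p s) $ k" for s
  have D: "(\<phi> has_derivative (\<lambda>r. (DF (p s) *v (r *\<^sub>R (a - b))) $ k)) (at s within {0..1})" for s
  proof -
    have "(p has_derivative (\<lambda>r. r *\<^sub>R (a - b))) (at s within {0..1})"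
      unfolding p_def by (auto intro!: derivative_eq_intros)
    from has_derivative_in_compose[OF this has_derivative_at_withinI[OF der]]
    have "((\<lambda>s. F (p s)) has_derivative (\<lambda>r. DF (p s) *v (r *\<^sub>R (a - b)))) (at s within {0..1})"
      by (simp add: o_def)
    from bounded_linear.has_derivative[OF bounded_linear_vec_nth this] show ?thesis
      unfolding \<phi>_def by simp
  qed
  obtain s where s: "s \<in> {0<..<1}" and eq: "\<phi> 1 - \<phi> 0 = (DF (p s) *v ((1 - 0) *\<^sub>R (a - b))) $ k"
    using mvt_simple[of 0 1 \<phi>, OF _ D] by auto
  have "p s = (1 - s) *\<^sub>R b + s *\<^sub>R a" unfolding p_def by (simp add: algebra_simps)
  then have "p s \<in> B" using cvx a b s convexD[of B b a "1 - s" s] by auto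
  moreover have "(F a - F b) $ k = (\<Sum>i\<in>UNIV. DF (p s) $ k $ i * (a - b) $ i)"
    using eq by (simp add: \<phi>_def p_def matrix_vector_mult_def)
  ultimately show thesis by (rule that)
qed

lemma lipschitz_from_matnorm:
  fixes F :: "real^'n \<Rightarrow> real^'n" and DF :: "real^'n \<Rightarrow> real^'n^'n"
  assumes der: "\<And>z. (F has_derivative (\<lambda>u. DF z *v u)) (at z)"
    and cvx: "convex B" and a: "a \<in> B" and b: "b \<in> B"
    and bd: "\<And>z. z \<in> B \<Longrightarrow> matnorm (DF z) \<le> M"
  shows "infnorm (F a - F b) \<le> M * infnorm (a - b)"
proof (rule infnorm_le_cartI)
  fix k
  obtain \<xi> where \<xi>: "\<xi> \<in> B" and eq: "(F a - F b) $ k = (\<Sum>i\<in>UNIV. DF \<xi> $ k $ i * (a - b) $ i)"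
    using row_mean_value[OF der cvx a b] .
  have "\<bar>(F a - F b) $ k\<bar> \<le> (\<Sum>i\<in>UNIV. \<bar>DF \<xi> $ k $ i\<bar>) * infnorm (a - b)"
    unfolding eq by (rule abs_weighted_sum_le_infnorm)
  also have "\<dots> \<le> M * infnorm (a - b)"
    using matnorm_row[of "DF \<xi>" k] bd[OF \<xi>] by (intro mult_right_mono infnorm_pos_le) auto
  finally show "\<bar>(F a - F b) $ k\<bar> \<le> M * infnorm (a - b)" .
qed

lemma abs_add3_le:
  fixes a b c :: real
  shows "\<bar>a\<bar> \<le> d \<Longrightarrow> \<bar>b\<bar> \<le> e \<Longrightarrow> \<bar>c\<bar> \<le> f \<Longrightarrow> \<bar>a + b + c\<bar> \<le> d + e + f"
  using abs_triangle_ineq[of "a + b" c] abs_triangle_ineq[of a b] by linarith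

text \<open>Row version of the one-sided estimate: for a row q whose absolute sum is at most M and
  whose diagonal-dominance quantity is at most \<Lambda>, a step of size \<delta> with \<open>\<delta> * M \<le> 1\<close> keeps
  the diagonal coefficient \<open>1 + \<delta> * q k\<close> nonnegative, so the k-th component grows at most by
  the factor \<open>1 + \<delta> * \<Lambda>\<close>, up to the contribution of the perturbation w.\<close>
lemma row_one_sided_bound:
  fixes q :: "'n::finite \<Rightarrow> real" and z w :: "real^'n"
  assumes row: "(\<Sum>i\<in>UNIV. \<bar>q i\<bar>) \<le> M" and diag: "q k + (\<Sum>i\<in>UNIV - {k}. \<bar>q i\<bar>) \<le> \<Lambda>"
    and \<delta>: "0 \<le> \<delta>" "\<delta> * M \<le> 1"
  shows "\<bar>z $ k + \<delta> * (\<Sum>i\<in>UNIV. q i * (z $ i + w $ i))\<bar>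
           \<le> (1 + \<delta> * \<Lambda>) * infnorm z + \<delta> * M * infnorm w"
proof -
  define off where "off = (\<Sum>i\<in>UNIV - {k}. \<bar>q i\<bar>)"
  have diag_nonneg: "0 \<le> 1 + \<delta> * q k"
  proof -
    have "\<bar>q k\<bar> \<le> (\<Sum>i\<in>UNIV. \<bar>q i\<bar>)" by (rule member_le_sum) auto
    then have "\<delta> * \<bar>q k\<bar> \<le> 1" using row \<delta> by (meson mult_left_mono order_trans)
    then show ?thesis using \<delta>(1) by (cases "q k \<ge> 0") simp_all
  qed
  have "(\<Sum>i\<in>UNIV. q i * z $ i) = q k * z $ k + (\<Sum>i\<in>UNIV - {k}. q i * z $ i)"
    by (simp add: sum.remove)
  then have split: "z $ k + \<delta> * (\<Sum>i\<in>UNIV. q i * (z $ i + w $ i))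
      = (1 + \<delta> * q k) * z $ k + \<delta> * (\<Sum>i\<in>UNIV - {k}. q i * z $ i) + \<delta> * (\<Sum>i\<in>UNIV. q i * w $ i)"
    by (simp add: sum.distrib algebra_simps)
  have "\<bar>(1 + \<delta> * q k) * z $ k\<bar> \<le> (1 + \<delta> * q k) * infnorm z"
    using diag_nonneg by (simp add: abs_mult component_le_infnorm_cart mult_left_mono)
  moreover have "\<bar>\<delta> * (\<Sum>i\<in>UNIV - {k}. q i * z $ i)\<bar> \<le> \<delta> * (off * infnorm z)"
    using mult_left_mono[OF abs_weighted_sum_le_infnorm \<delta>(1)] \<delta>(1) unfolding off_def
    by (simp add: abs_mult)
  moreover have "\<bar>\<delta> * (\<Sum>i\<in>UNIV. q i * w $ i)\<bar> \<le> \<delta> * (M * infnorm w)"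
  proof -
    have "\<bar>\<Sum>i\<in>UNIV. q i * w $ i\<bar> \<le> M * infnorm w"
      using abs_weighted_sum_le_infnorm[where S = UNIV and q = q and w = w] row infnorm_pos_le[of w]
      by (meson mult_right_mono order_trans)
    then show ?thesis using mult_left_mono[OF _ \<delta>(1)] \<delta>(1) by (simp add: abs_mult)
  qed
  ultimately have "\<bar>z $ k + \<delta> * (\<Sum>i\<in>UNIV. q i * (z $ i + w $ i))\<bar>
      \<le> (1 + \<delta> * q k) * infnorm z + \<delta> * (off * infnorm z) + \<delta> * (M * infnorm w)"
    unfolding split by (rule abs_add3_le)
  also have "\<dots> = (1 + \<delta> * (q k + off)) * infnorm z + \<delta> * M * infnorm w"
    by (simp add: algebra_simps)
  also have "\<dots> \<le> (1 + \<delta> * \<Lambda>) * infnorm z + \<delta> * M * infnorm w"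
    using mult_left_mono[OF diag[folded off_def] \<delta>(1)] infnorm_pos_le[of z] by (simp add: mult_right_mono)
  finally show ?thesis .
qed

text \<open>The one-sided estimate behind the use of the logarithmic norm: an explicit Euler-type
  increment of F, applied to z, enlarges the max norm of z at most by the factor
  \<open>1 + \<delta> * \<Lambda>\<close>, up to the defect \<open>a - b - z\<close>.\<close>
lemma one_sided_estimate_from_lognorm:
  fixes F :: "real^'n \<Rightarrow> real^'n" and DF :: "real^'n \<Rightarrow> real^'n^'n"
  assumes der: "\<And>z. (F has_derivative (\<lambda>u. DF z *v u)) (at z)"
    and cvx: "convex B" and a: "a \<in> B" and b: "b \<in> B"
    and bd: "\<And>z. z \<in> B \<Longrightarrow> matnorm (DF z) \<le> M"
    and lg: "\<And>z. z \<in> B \<Longrightarrow> lognorm (DF z) \<le> \<Lambda>"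
    and \<delta>: "0 \<le> \<delta>" "\<delta> * M \<le> 1"
  shows "infnorm (z + \<delta> *\<^sub>R (F a - F b))
           \<le> (1 + \<delta> * \<Lambda>) * infnorm z + \<delta> * M * infnorm (a - b - z)"
proof (rule infnorm_le_cartI)
  fix k
  obtain \<xi> where \<xi>: "\<xi> \<in> B" and eq: "(F a - F b) $ k = (\<Sum>i\<in>UNIV. DF \<xi> $ k $ i * (a - b) $ i)"
    using row_mean_value[OF der cvx a b] .
  have "(z + \<delta> *\<^sub>R (F a - F b)) $ k
      = z $ k + \<delta> * (\<Sum>i\<in>UNIV. DF \<xi> $ k $ i * (z $ i + (a - b - z) $ i))"
    using eq by simp
  also have "\<bar>\<dots>\<bar> \<le> (1 + \<delta> * \<Lambda>) * infnorm z + \<delta> * M * infnorm (a - b - z)"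
    using matnorm_row[of "DF \<xi>" k] bd[OF \<xi>] lognorm_row[of "DF \<xi>" k] lg[OF \<xi>] \<delta>
    by (intro row_one_sided_bound) auto
  finally show "\<bar>(z + \<delta> *\<^sub>R (F a - F b)) $ k\<bar> \<le> (1 + \<delta> * \<Lambda>) * infnorm z + \<delta> * M * infnorm (a - b - z)" .
qed

lemma has_integral_infnorm_bound:
  fixes F :: "real \<Rightarrow> real^'n"
  assumes "(F has_integral I) {a..b}" "a \<le> b" "\<And>s. s \<in> {a..b} \<Longrightarrow> infnorm (F s) \<le> M"
  shows "infnorm I \<le> M * (b - a)"
proof (rule infnorm_le_cartI)
  fix j
  have M: "0 \<le> M" using order_trans[OF infnorm_pos_le assms(3)[of a]] assms(2) by simp
  have "((\<lambda>s. F s $ j) has_integral I $ j) {a..b}"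
    using has_integral_linear[OF assms(1) bounded_linear_vec_nth] by (simp add: o_def)
  then have "norm (I $ j) \<le> M * Henstock_Kurzweil_Integration.content {a..b}"
  proof (rule has_integral_bound_real[OF M finite.emptyI])
    fix s assume "s \<in> {a..b} - {}"
    then show "norm (F s $ j) \<le> M" using order_trans[OF component_le_infnorm_cart assms(3)] by simp
  qed
  then show "\<bar>I $ j\<bar> \<le> M * (b - a)" using assms(2) by simp
qed

definition primitive_on :: "(real \<Rightarrow> 'a::banach) \<Rightarrow> (real \<Rightarrow> 'a) \<Rightarrow> real \<Rightarrow> real \<Rightarrow> bool" where
  "primitive_on z F a b \<longleftrightarrow> (\<forall>p q. a \<le> p \<longrightarrow> p \<le> q \<longrightarrow> q \<le> b \<longrightarrow> (F has_integral (z q - z p)) {p..q})"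

lemma primitive_onD:
  "primitive_on z F a b \<Longrightarrow> a \<le> p \<Longrightarrow> p \<le> q \<Longrightarrow> q \<le> b \<Longrightarrow> (F has_integral (z q - z p)) {p..q}"
  unfolding primitive_on_def by blast

lemma primitive_onI_from_start:
  fixes F :: "real \<Rightarrow> 'a::banach"
  assumes "\<And>t. t \<in> {a..b} \<Longrightarrow> (F has_integral (z t - z a)) {a..t}"
  shows "primitive_on z F a b"
  unfolding primitive_on_def
proof (intro allI impI)
  fix p q assume pq: "a \<le> p" "p \<le> q" "q \<le> b"
  have "F integrable_on {p..q}"
    using integrable_on_subinterval[of F "{a..q}" p q] assms[of q] pq by auto
  then have I: "(F has_integral integral {p..q} F) {p..q}" by auto
  have "(F has_integral (z q - z a)) {a..q}" using assms[of q] pq by auto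
  moreover have "(F has_integral (z p - z a + integral {p..q} F)) {a..q}"
    using has_integral_combine[OF pq(1,2) assms[of p] I] pq by auto
  ultimately have "z q - z a = z p - z a + integral {p..q} F" by (rule has_integral_unique)
  then have "integral {p..q} F = z q - z p" by (simp add: algebra_simps)
  with I show "(F has_integral (z q - z p)) {p..q}" by simp
qed

lemma primitive_onI_from_derivative:
  assumes "\<And>t. t \<in> {a..b} \<Longrightarrow> (z has_vector_derivative F t) (at t within {a..b})"
  shows "primitive_on z F a b"
  unfolding primitive_on_def
proof (intro allI impI)
  fix p q assume pq: "a \<le> p" "p \<le> q" "q \<le> b"
  show "(F has_integral (z q - z p)) {p..q}"
  proof (rule fundamental_theorem_of_calculus[OF pq(2)])
    fix s assume "s \<in> {p..q}"
    with pq show "(z has_vector_derivative F s) (at s within {p..q})"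
      by (intro has_vector_derivative_within_subset[OF assms]) auto
  qed
qed

lemma primitive_on_integral:
  assumes "continuous_on {a..b} F"
  shows "primitive_on (\<lambda>t. z0 + integral {a..t} F) F a b"
proof (rule primitive_onI_from_start)
  fix t assume "t \<in> {a..b}"
  then have "F integrable_on {a..t}"
    by (intro integrable_continuous_interval continuous_on_subset[OF assms]) auto
  then show "(F has_integral (z0 + integral {a..t} F - (z0 + integral {a..a} F))) {a..t}"
    by (simp add: integrable_integral)
qed

lemma primitive_on_diff:
  assumes "primitive_on z F a b" "primitive_on w G a b"
  shows "primitive_on (\<lambda>t. z t - w t) (\<lambda>s. F s - G s) a b"
  unfolding primitive_on_def
proof (intro allI impI)
  fix p q assume "a \<le> p" "p \<le> q" "q \<le> b"
  then have "((\<lambda>s. F s - G s) has_integral (z q - z p - (w q - w p))) {p..q}"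
    using assms by (intro has_integral_diff primitive_onD)
  then show "((\<lambda>s. F s - G s) has_integral (z q - w q - (z p - w p))) {p..q}"
    by (simp add: algebra_simps)
qed

lemma primitive_on_cong:
  assumes "primitive_on z F a b" "\<And>s. s \<in> {a..b} \<Longrightarrow> F s = G s"
  shows "primitive_on z G a b"
  unfolding primitive_on_def
proof (intro allI impI)
  fix p q assume "a \<le> p" "p \<le> q" "q \<le> b"
  with assms(1) have "(F has_integral (z q - z p)) {p..q}" by (rule primitive_onD)
  then show "(G has_integral (z q - z p)) {p..q}"
  proof (rule has_integral_eq[rotated])
    fix s assume "s \<in> {p..q}"
    with \<open>a \<le> p\<close> \<open>q \<le> b\<close> show "F s = G s" by (intro assms(2)) auto
  qed
qed

lemma primitive_on_lipschitz:
  fixes z :: "real \<Rightarrow> real^'n"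
  assumes "primitive_on z F a b" "\<And>s. s \<in> {a..b} \<Longrightarrow> infnorm (F s) \<le> M"
    and "p \<in> {a..b}" "q \<in> {a..b}"
  shows "infnorm (z q - z p) \<le> M * \<bar>q - p\<bar>"
proof -
  have *: "infnorm (z q - z p) \<le> M * \<bar>q - p\<bar>" if "p \<in> {a..b}" "q \<in> {a..b}" "p \<le> q" for p q
    using has_integral_infnorm_bound[OF primitive_onD[OF assms(1)] \<open>p \<le> q\<close>] assms(2) that by auto
  show ?thesis
  proof (cases "p \<le> q")
    case False
    then show ?thesis
      using *[of q p] assms(3,4) by (simp add: infnorm_sub[of "z q"] abs_minus_commute[of q])
  qed (use * assms(3,4) in blast)
qed

lemma primitive_on_continuous:
  fixes z :: "real \<Rightarrow> real^'n"
  assumes "primitive_on z F a b" "\<And>s. s \<in> {a..b} \<Longrightarrow> infnorm (F s) \<le> M"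
  shows "continuous_on {a..b} z"
proof (rule lipschitz_on_continuous_on)
  show "(sqrt CARD('n) * \<bar>M\<bar>)-lipschitz_on {a..b} z"
  proof (rule lipschitz_onI)
    fix p q assume "p \<in> {a..b}" "q \<in> {a..b}"
    have "dist (z p) (z q) \<le> sqrt CARD('n) * infnorm (z p - z q)"
      unfolding dist_norm using norm_le_infnorm[of "z p - z q"] by simp
    also have "\<dots> \<le> sqrt CARD('n) * (\<bar>M\<bar> * dist p q)"
    proof (rule mult_left_mono)
      have "infnorm (z p - z q) \<le> M * \<bar>p - q\<bar>"
        by (rule primitive_on_lipschitz[OF assms \<open>q \<in> _\<close> \<open>p \<in> _\<close>])
      also have "\<dots> \<le> \<bar>M\<bar> * dist p q" by (simp add: dist_real_def mult_right_mono)
      finally show "infnorm (z p - z q) \<le> \<bar>M\<bar> * dist p q" .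
    qed simp
    finally show "dist (z p) (z q) \<le> sqrt CARD('n) * \<bar>M\<bar> * dist p q" by (simp add: mult.assoc)
  qed simp
qed

lemma primitive_on_euler_step:
  fixes z :: "real \<Rightarrow> real^'n"
  assumes "primitive_on z F a b" "a \<le> t" "0 < \<delta>" "t + \<delta> \<le> b"
    and "\<And>s. s \<in> {t..t+\<delta>} \<Longrightarrow> infnorm (F s - c) \<le> \<rho>"
  shows "infnorm (z (t + \<delta>)) \<le> infnorm (z t + \<delta> *\<^sub>R c) + \<rho> * \<delta>"
proof -
  have "((\<lambda>s. F s - c) has_integral (z (t + \<delta>) - z t - Henstock_Kurzweil_Integration.content {t..t+\<delta>} *\<^sub>R c)) {t..t+\<delta>}"
    using assms(2-4) by (intro has_integral_diff primitive_onD[OF assms(1)] has_integral_const_real) auto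
  then have "((\<lambda>s. F s - c) has_integral (z (t + \<delta>) - (z t + \<delta> *\<^sub>R c))) {t..t+\<delta>}"
    using assms(3) by (simp add: algebra_simps)
  from has_integral_infnorm_bound[OF this _ assms(5)] assms(3)
  have "infnorm (z (t + \<delta>) - (z t + \<delta> *\<^sub>R c)) \<le> \<rho> * \<delta>" by simp
  then show ?thesis using infnorm_triangle[of "z t + \<delta> *\<^sub>R c" "z (t + \<delta>) - (z t + \<delta> *\<^sub>R c)"] by simp
qed

lemma nonpos_if_zeros_not_upcrossed:
  fixes G :: "real \<Rightarrow> real"
  assumes cont: "continuous_on {a..b} G" and start: "G a < 0"
    and zeros: "\<And>t \<eta>. t \<in> {a..<b} \<Longrightarrow> G t = 0 \<Longrightarrow> \<eta> > 0 \<Longrightarrow>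
                  \<exists>\<delta>. 0 < \<delta> \<and> \<delta> < \<eta> \<and> t + \<delta> \<le> b \<and> G (t + \<delta>) \<le> 0"
    and t1: "t1 \<in> {a..b}"
  shows "G t1 \<le> 0"
proof (rule ccontr)
  assume "\<not> G t1 \<le> 0"
  define S where "S = {a..t1} \<inter> G -` {..0}"
  have "continuous_on {a..t1} G" by (rule continuous_on_subset[OF cont]) (use t1 in auto)
  then have "closed S" unfolding S_def by (rule continuous_closed_preimage) auto
  moreover have "a \<in> S" "bdd_above S" using start t1 unfolding S_def by (auto intro: bdd_aboveI[of _ t1])
  ultimately have "Sup S \<in> S" by (blast intro: closed_contains_Sup)
  define t0 where "t0 = Sup S"
  have t0: "a \<le> t0" "t0 \<le> t1" "G t0 \<le> 0" using \<open>Sup S \<in> S\<close> unfolding t0_def S_def by auto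
  have t0_lt: "t0 < t1" using t0 \<open>\<not> G t1 \<le> 0\<close> by (cases "t0 = t1") auto
  have pos: "G t > 0" if "t0 < t" "t \<le> t1" for t
  proof (rule ccontr)
    assume "\<not> G t > 0"
    with that t0 have "t \<in> S" unfolding S_def by auto
    then have "t \<le> t0" using \<open>bdd_above S\<close> unfolding t0_def by (rule cSup_upper)
    with \<open>t0 < t\<close> show False by simp
  qed
  have "G t0 = 0"
  proof (rule ccontr)
    assume "G t0 \<noteq> 0"
    then have "G t0 \<le> 0" "0 \<le> G t1" using t0 \<open>\<not> G t1 \<le> 0\<close> by auto
    moreover have "continuous_on {t0..t1} G" by (rule continuous_on_subset[OF cont]) (use t0 t1 in auto)
    ultimately obtain s where "t0 \<le> s" "s \<le> t1" "G s = 0" using IVT'[of G t0 0 t1] t0 by blast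
    with pos \<open>G t0 \<noteq> 0\<close> show False by (cases "s = t0") force+
  qed
  then obtain \<delta> where "0 < \<delta>" "\<delta> < t1 - t0" "G (t0 + \<delta>) \<le> 0"
    using zeros[of t0 "t1 - t0"] t0 t0_lt t1 by auto
  with pos[of "t0 + \<delta>"] show False by simp
qed

lemma derivative_right_step:
  assumes "(\<psi> has_real_derivative d) (at t0 within S)" "e > 0"
  obtains \<eta> where "\<eta> > 0" "\<And>\<delta>. 0 < \<delta> \<Longrightarrow> \<delta> < \<eta> \<Longrightarrow> t0 + \<delta> \<in> S \<Longrightarrow> \<psi> t0 + \<delta> * d - e * \<delta> \<le> \<psi> (t0 + \<delta>)"
proof -
  have "(\<psi> has_derivative (\<lambda>h. h * d)) (at t0 within S)"
    using assms(1) unfolding has_field_derivative_def by (subst mult.commute) auto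
  then obtain \<eta> where "\<eta> > 0" and \<eta>: "\<And>s. s \<in> S \<Longrightarrow> norm (s - t0) < \<eta> \<Longrightarrow>
      norm (\<psi> s - \<psi> t0 - (s - t0) * d) \<le> e * norm (s - t0)"
    unfolding has_derivative_within_alt using assms(2) by blast
  have "\<psi> t0 + \<delta> * d - e * \<delta> \<le> \<psi> (t0 + \<delta>)" if "0 < \<delta>" "\<delta> < \<eta>" "t0 + \<delta> \<in> S" for \<delta>
    using \<eta>[of "t0 + \<delta>"] that by (auto simp: abs_le_iff)
  with \<open>\<eta> > 0\<close> show thesis by (rule that)
qed

text \<open>Comparison principle for a continuous function N whose upper right Dini derivative
  is bounded by \<open>\<Lambda> * N + \<beta>\<close>, against a differentiable supersolution \<psi> of the same
  inequality; first with a small exponentially growing margin.\<close>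
lemma dini_comparison_with_margin:
  fixes N \<psi> \<psi>' \<beta> :: "real \<Rightarrow> real"
  assumes N_cont: "continuous_on {a..c} N"
    and \<psi>_der: "\<And>t. t \<in> {a..c} \<Longrightarrow> (\<psi> has_real_derivative \<psi>' t) (at t within {a..c})"
    and \<psi>_super: "\<And>t. t \<in> {a..c} \<Longrightarrow> \<Lambda> * \<psi> t + \<beta> t \<le> \<psi>' t"
    and init: "N a \<le> \<psi> a"
    and dini: "\<And>t \<epsilon>. t \<in> {a..<c} \<Longrightarrow> \<epsilon> > 0 \<Longrightarrow> \<exists>\<eta>>0. \<forall>\<delta>. 0 < \<delta> \<longrightarrow> \<delta> < \<eta> \<longrightarrow> t + \<delta> \<le> c \<longrightarrow>
                 N (t + \<delta>) \<le> N t + \<delta> * (\<Lambda> * N t + \<beta> t + \<epsilon>)"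
    and \<epsilon>: "\<epsilon> > 0" and t1: "t1 \<in> {a..c}"
  shows "N t1 \<le> \<psi> t1 + \<epsilon> * exp ((\<bar>\<Lambda>\<bar> + 1) * (t1 - a))"
proof -
  define k where "k = \<bar>\<Lambda>\<bar> + 1"
  define \<theta> where "\<theta> t = \<epsilon> * exp (k * (t - a))" for t
  define G where "G t = N t - \<psi> t - \<theta> t" for t
  have "G t1 \<le> 0"
  proof (rule nonpos_if_zeros_not_upcrossed[OF _ _ _ t1])
    show "continuous_on {a..c} G"
      unfolding G_def \<theta>_def by (intro continuous_intros N_cont DERIV_continuous_on[OF \<psi>_der])
    show "G a < 0" unfolding G_def \<theta>_def using init \<epsilon> by simp
  next
    fix t0 \<eta> :: real assume t0: "t0 \<in> {a..<c}" and "G t0 = 0" and "\<eta> > 0"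
    then have Nt0: "N t0 = \<psi> t0 + \<theta> t0" unfolding G_def by simp
    define e where "e = \<epsilon> / 4"
    have e: "e > 0" unfolding e_def using \<epsilon> by simp
    obtain \<eta>1 where \<eta>1: "\<eta>1 > 0" "\<And>\<delta>. 0 < \<delta> \<Longrightarrow> \<delta> < \<eta>1 \<Longrightarrow> t0 + \<delta> \<le> c \<Longrightarrow>
                 N (t0 + \<delta>) \<le> N t0 + \<delta> * (\<Lambda> * N t0 + \<beta> t0 + e)"
      using dini[OF t0 e] by blast
    obtain \<eta>2 where \<eta>2: "\<eta>2 > 0" "\<And>\<delta>. 0 < \<delta> \<Longrightarrow> \<delta> < \<eta>2 \<Longrightarrow> t0 + \<delta> \<in> {a..c} \<Longrightarrow>
        \<psi> t0 + \<delta> * \<psi>' t0 - e * \<delta> \<le> \<psi> (t0 + \<delta>)"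
      using t0 derivative_right_step[OF \<psi>_der[of t0] e] by auto
    define \<delta> where "\<delta> = min (min \<eta> \<eta>1) (min \<eta>2 (c - t0)) / 2"
    have \<delta>: "0 < \<delta>" "\<delta> < \<eta>" "\<delta> < \<eta>1" "\<delta> < \<eta>2" "t0 + \<delta> \<le> c"
      using \<eta>1(1) \<eta>2(1) \<open>\<eta> > 0\<close> t0 by (auto simp: \<delta>_def min_def field_simps)
    have N_step: "N (t0 + \<delta>) \<le> N t0 + \<delta> * (\<Lambda> * N t0 + \<beta> t0 + e)"
      using \<eta>1(2) \<delta> by auto
    have \<psi>_step: "\<psi> t0 + \<delta> * \<psi>' t0 - e * \<delta> \<le> \<psi> (t0 + \<delta>)"
      using \<eta>2(2)[of \<delta>] \<delta> t0 by auto
    have "\<theta> t0 * (1 + k * \<delta>) \<le> \<theta> t0 * exp (k * \<delta>)"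
      unfolding \<theta>_def using \<epsilon> by (intro mult_left_mono exp_ge_add_one_self) auto
    also have "\<dots> = \<theta> (t0 + \<delta>)" unfolding \<theta>_def by (simp add: algebra_simps flip: exp_add)
    finally have \<theta>_step: "\<theta> t0 + \<delta> * (k * \<theta> t0) \<le> \<theta> (t0 + \<delta>)" by (simp add: algebra_simps)
    have \<theta>_ge: "\<epsilon> \<le> \<theta> t0" unfolding \<theta>_def k_def using \<epsilon> t0 by simp
    define X where "X = \<Lambda> * \<theta> t0 + (\<Lambda> * \<psi> t0 + \<beta> t0 - \<psi>' t0) + 2 * e - k * \<theta> t0"
    have "X < 0"
    proof -
      have "\<Lambda> * \<theta> t0 \<le> \<bar>\<Lambda>\<bar> * \<theta> t0" using \<theta>_ge \<epsilon> by (intro mult_right_mono) auto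
      moreover have "k * \<theta> t0 = \<bar>\<Lambda>\<bar> * \<theta> t0 + \<theta> t0" unfolding k_def by (simp add: algebra_simps)
      moreover have "\<Lambda> * \<psi> t0 + \<beta> t0 \<le> \<psi>' t0" using \<psi>_super t0 by auto
      ultimately show ?thesis using \<theta>_ge \<epsilon> unfolding X_def e_def by linarith
    qed
    have "\<delta> * (\<Lambda> * (\<psi> t0 + \<theta> t0) + \<beta> t0 + e) - \<delta> * \<psi>' t0 + e * \<delta> - \<delta> * (k * \<theta> t0) = \<delta> * X"
      unfolding X_def by (simp add: algebra_simps)
    moreover have "\<delta> * X < 0" using \<delta>(1) \<open>X < 0\<close> by (rule mult_pos_neg)
    ultimately have "G (t0 + \<delta>) < 0"
      using N_step[unfolded Nt0] \<psi>_step \<theta>_step unfolding G_def by linarith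
    with \<delta> show "\<exists>\<delta>. 0 < \<delta> \<and> \<delta> < \<eta> \<and> t0 + \<delta> \<le> c \<and> G (t0 + \<delta>) \<le> 0" by auto
  qed
  then show ?thesis unfolding G_def \<theta>_def k_def by simp
qed

lemma dini_comparison:
  fixes N \<psi> \<psi>' \<beta> :: "real \<Rightarrow> real"
  assumes "continuous_on {a..c} N"
    and "\<And>t. t \<in> {a..c} \<Longrightarrow> (\<psi> has_real_derivative \<psi>' t) (at t within {a..c})"
    and "\<And>t. t \<in> {a..c} \<Longrightarrow> \<Lambda> * \<psi> t + \<beta> t \<le> \<psi>' t"
    and "N a \<le> \<psi> a"
    and "\<And>t \<epsilon>. t \<in> {a..<c} \<Longrightarrow> \<epsilon> > 0 \<Longrightarrow> \<exists>\<eta>>0. \<forall>\<delta>. 0 < \<delta> \<longrightarrow> \<delta> < \<eta> \<longrightarrow> t + \<delta> \<le> c \<longrightarrow>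
                 N (t + \<delta>) \<le> N t + \<delta> * (\<Lambda> * N t + \<beta> t + \<epsilon>)"
    and t1: "t1 \<in> {a..c}"
  shows "N t1 \<le> \<psi> t1"
proof (rule field_le_epsilon)
  fix e :: real assume "e > 0"
  define E where "E = exp ((\<bar>\<Lambda>\<bar> + 1) * (t1 - a))"
  have "N t1 \<le> \<psi> t1 + (e / E) * E"
    unfolding E_def using \<open>e > 0\<close> by (intro dini_comparison_with_margin[OF assms(1-5) divide_pos_pos t1]) auto
  then show "N t1 \<le> \<psi> t1 + e" unfolding E_def by simp
qed

lemma sum_index_times_complement:
  "(\<Sum>j<N. (real j + 1) * (c - (real j + 1)))
     = c * real N * (real N + 1) / 2 - real N * (real N + 1) * (2 * real N + 1) / 6"
proof (induction N)
  case (Suc N)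
  show ?case unfolding sum.lessThan_Suc Suc.IH by (simp add: field_simps)
qed simp

lemma summation_by_parts:
  fixes \<gamma> \<phi> :: "nat \<Rightarrow> real"
  shows "(\<Sum>j<N. \<gamma> (Suc j) * (\<phi> (Suc j) - \<phi> j))
           = (\<Sum>j<N. \<phi> (Suc j) * (\<gamma> (Suc j) - \<gamma> (Suc (Suc j)))) + \<phi> N * \<gamma> (Suc N) - \<phi> 0 * \<gamma> 1"
proof (induction N)
  case (Suc N)
  have "\<And>S::real. S + \<phi> N * \<gamma> (Suc N) - \<phi> 0 * \<gamma> 1 + \<gamma> (Suc N) * (\<phi> (Suc N) - \<phi> N)
     = S + \<phi> (Suc N) * (\<gamma> (Suc N) - \<gamma> (Suc (Suc N))) + \<phi> (Suc N) * \<gamma> (Suc (Suc N)) - \<phi> 0 * \<gamma> 1"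
    by (simp add: algebra_simps)
  then show ?case unfolding sum.lessThan_Suc Suc.IH .
qed simp

lemma summation_by_parts_bound:
  fixes \<gamma> \<phi> :: "nat \<Rightarrow> real"
  assumes ends: "\<phi> 0 = 0" "\<phi> N = 0"
    and \<phi>_bd: "\<And>j. j \<le> N \<Longrightarrow> \<bar>\<phi> j\<bar> \<le> C * real j * (real N - real j)"
    and \<gamma>_bd: "\<And>j. Suc j < N \<Longrightarrow> \<bar>\<gamma> (Suc j) - \<gamma> (Suc (Suc j))\<bar> \<le> D"
    and "0 \<le> C" "0 \<le> D"
  shows "\<bar>\<Sum>j<N. \<gamma> (Suc j) * (\<phi> (Suc j) - \<phi> j)\<bar> \<le> C * D * real N ^ 3 / 6"
proof -
  have term_bd: "\<bar>\<phi> (Suc j) * (\<gamma> (Suc j) - \<gamma> (Suc (Suc j)))\<bar>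
      \<le> C * D * ((real j + 1) * (real N - (real j + 1)))" if "j < N" for j
  proof (cases "Suc j = N")
    case True
    then show ?thesis using ends that \<open>0 \<le> C\<close> \<open>0 \<le> D\<close> by simp
  next
    case False
    then have "\<bar>\<phi> (Suc j)\<bar> * \<bar>\<gamma> (Suc j) - \<gamma> (Suc (Suc j))\<bar> \<le> (C * (real j + 1) * (real N - (real j + 1))) * D"
      using \<phi>_bd[of "Suc j"] \<gamma>_bd[of j] that \<open>0 \<le> C\<close> by (intro mult_mono) (auto simp: add.commute)
    then show ?thesis by (simp only: abs_mult) (simp add: algebra_simps)
  qed
  have "\<bar>\<Sum>j<N. \<gamma> (Suc j) * (\<phi> (Suc j) - \<phi> j)\<bar> = \<bar>\<Sum>j<N. \<phi> (Suc j) * (\<gamma> (Suc j) - \<gamma> (Suc (Suc j)))\<bar>"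
    unfolding summation_by_parts ends by simp
  also have "\<dots> \<le> (\<Sum>j<N. C * D * ((real j + 1) * (real N - (real j + 1))))"
    by (rule order_trans[OF sum_abs sum_mono]) (use term_bd in auto)
  also have "\<dots> = C * D * ((real N ^ 3 - real N) / 6)"
    unfolding sum_distrib_left[symmetric] sum_index_times_complement
    by (simp add: power3_eq_cube field_simps)
  also have "\<dots> \<le> C * D * real N ^ 3 / 6"
    using \<open>0 \<le> C\<close> \<open>0 \<le> D\<close> by (simp add: mult_left_mono)
  finally show ?thesis .
qed

lemma le_of_le_plus_over_nat:
  fixes x c d :: real
  assumes "\<And>N. N \<ge> 1 \<Longrightarrow> x \<le> c + d / real N"
  shows "x \<le> c"
proof (rule LIMSEQ_le_const)
  show "(\<lambda>N. c + d / real N) \<longlonglongrightarrow> c"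
    using tendsto_add[OF tendsto_const lim_const_over_n[of d]] by simp
  show "\<exists>N0. \<forall>N\<ge>N0. x \<le> c + d / real N" using assms by blast
qed

lemma integral_abs_bound:
  fixes v :: "real \<Rightarrow> real"
  assumes "p \<le> q" "v integrable_on {p..q}" "\<And>s. s \<in> {p..q} \<Longrightarrow> \<bar>v s\<bar> \<le> V"
  shows "\<bar>integral {p..q} v\<bar> \<le> V * (q - p)"
proof -
  have "0 \<le> V" using assms(1) assms(3)[of p] by auto
  have "norm (integral {p..q} v) \<le> V * Henstock_Kurzweil_Integration.content {p..q}"
    by (rule has_integral_bound_real[OF \<open>0 \<le> V\<close> finite.emptyI integrable_integral[OF assms(2)]])
       (use assms(3) in auto)
  then show ?thesis using assms(1) by simp
qed

definition mean :: "real \<Rightarrow> real \<Rightarrow> (real \<Rightarrow> real) \<Rightarrow> real" where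
  "mean a b v = integral {a..b} v / (b - a)"

lemma mean_abs_bound:
  fixes v :: "real \<Rightarrow> real"
  assumes "a < b" "v integrable_on {a..b}" "\<And>s. s \<in> {a..b} \<Longrightarrow> \<bar>v s\<bar> \<le> V"
  shows "\<bar>mean a b v\<bar> \<le> V"
  using integral_abs_bound[of a b v V] assms by (simp add: mean_def abs_div divide_le_eq)

text \<open>The quantity of interest is the integral of G against the deviation of v
  from its mean W; the primitive \<Phi> of this deviation vanishes at both endpoints.\<close>
locale mean_deviation =
  fixes v G :: "real \<Rightarrow> real" and a b V lc :: real
  assumes ab: "a < b"
    and v_int: "v integrable_on {a..b}"
    and v_bd: "\<And>s. s \<in> {a..b} \<Longrightarrow> \<bar>v s\<bar> \<le> V"
    and vG_int: "(\<lambda>s. v s * G s) integrable_on {a..b}"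
    and G_lip: "\<And>s s'. s \<in> {a..b} \<Longrightarrow> s' \<in> {a..b} \<Longrightarrow> \<bar>G s - G s'\<bar> \<le> lc * \<bar>s - s'\<bar>"
    and lc: "0 \<le> lc"
begin

abbreviation W :: real where "W \<equiv> mean a b v"

definition \<Phi> :: "real \<Rightarrow> real" where "\<Phi> t = integral {a..t} v - (t - a) * W"

lemma V_nonneg: "0 \<le> V"
  using v_bd[of a] ab by auto

lemma integrable_sub: "f integrable_on {a..b} \<Longrightarrow> a \<le> p \<Longrightarrow> q \<le> b \<Longrightarrow> f integrable_on {p..q}"
  for f :: "real \<Rightarrow> real"
  by (rule integrable_on_subinterval) auto

lemma integral_v_bound: "a \<le> p \<Longrightarrow> p \<le> q \<Longrightarrow> q \<le> b \<Longrightarrow> \<bar>integral {p..q} v\<bar> \<le> V * (q - p)"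
  by (rule integral_abs_bound) (auto intro: integrable_sub[OF v_int] v_bd)

lemma W_bound: "\<bar>W\<bar> \<le> V"
  using ab v_int v_bd by (rule mean_abs_bound)

lemma \<Phi>_ends: "\<Phi> a = 0" "\<Phi> b = 0"
  unfolding \<Phi>_def mean_def using ab by simp_all

lemma \<Phi>_bound:
  assumes "a \<le> t" "t \<le> b"
  shows "\<bar>\<Phi> t\<bar> \<le> 2 * V * (t - a) * (b - t) / (b - a)"
proof -
  have "integral {a..b} v = integral {a..t} v + integral {t..b} v"
    using Henstock_Kurzweil_Integration.integral_combine[OF assms v_int] by simp
  then have eq: "\<Phi> t = ((b - t) * integral {a..t} v - (t - a) * integral {t..b} v) / (b - a)"
    unfolding \<Phi>_def mean_def using ab by (simp add: field_simps)
  have "\<bar>(b - t) * integral {a..t} v\<bar> \<le> (b - t) * (V * (t - a))"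
    using integral_v_bound[of a t] assms by (simp add: abs_mult mult_left_mono)
  moreover have "\<bar>(t - a) * integral {t..b} v\<bar> \<le> (t - a) * (V * (b - t))"
    using integral_v_bound[of t b] assms by (simp add: abs_mult mult_left_mono)
  ultimately have "\<bar>(b - t) * integral {a..t} v - (t - a) * integral {t..b} v\<bar> \<le> 2 * V * (t - a) * (b - t)"
    by (simp add: algebra_simps)
  then show ?thesis unfolding eq using ab by (simp add: abs_div divide_right_mono)
qed

lemma G_cont: "continuous_on {a..b} G"
proof (rule lipschitz_on_continuous_on)
  show "lc-lipschitz_on {a..b} G"
    using G_lip lc by (auto simp: lipschitz_on_def dist_real_def)
qed

lemma deviation_int: "a \<le> p \<Longrightarrow> q \<le> b \<Longrightarrow> (\<lambda>s. (v s - W) * (G s - c)) integrable_on {p..q}"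
proof -
  have "(\<lambda>s. v s * G s - W * G s - c * v s + c * W) integrable_on {a..b}"
    using vG_int integrable_on_cmult_left[OF integrable_continuous_interval[OF G_cont], of W]
      integrable_on_cmult_left[OF v_int, of c]
    by (intro integrable_add integrable_diff integrable_const_ivl) simp_all
  then have "(\<lambda>s. (v s - W) * (G s - c)) integrable_on {a..b}" by (simp add: algebra_simps)
  then show "a \<le> p \<Longrightarrow> q \<le> b \<Longrightarrow> ?thesis" by (rule integrable_sub)
qed

text \<open>On a subinterval [p, q], freezing G at the right endpoint splits the integral into a
  telescoping term and a remainder that is quadratically small in the length q - p.\<close>
lemma piece_split:
  assumes "a \<le> p" "p \<le> q" "q \<le> b"
  shows "integral {p..q} (\<lambda>s. (v s - W) * G s)
           = G q * (\<Phi> q - \<Phi> p) + integral {p..q} (\<lambda>s. (v s - W) * (G s - G q))"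
proof -
  have vpq: "v integrable_on {p..q}" using integrable_sub[OF v_int] assms by auto
  have "(\<lambda>s. (v s - W) * G s) = (\<lambda>s. (v s - W) * (G s - G q) + (G q * v s - G q * W))"
    by (auto simp: algebra_simps)
  then have "integral {p..q} (\<lambda>s. (v s - W) * G s)
      = integral {p..q} (\<lambda>s. (v s - W) * (G s - G q)) + integral {p..q} (\<lambda>s. G q * v s - G q * W)"
    using integral_add[OF deviation_int[OF assms(1,3)] integrable_diff[OF integrable_on_cmult_left[OF vpq] integrable_const_ivl]]
    by simp
  also have "integral {p..q} (\<lambda>s. G q * v s - G q * W) = G q * integral {p..q} v - (q - p) * (G q * W)"
    using integral_diff[OF integrable_on_cmult_left[OF vpq, of "G q"] integrable_const_ivl[of "G q * W" p q]] assms
    by (simp add: mult.assoc)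
  also have "integral {p..q} v = integral {a..q} v - integral {a..p} v"
    using Henstock_Kurzweil_Integration.integral_combine[OF assms(1,2) integrable_sub[OF v_int order_refl assms(3)]]
    by simp
  finally show ?thesis unfolding \<Phi>_def by (simp add: algebra_simps)
qed

lemma piece_remainder_bound:
  assumes "a \<le> p" "p \<le> q" "q \<le> b"
  shows "\<bar>integral {p..q} (\<lambda>s. (v s - W) * (G s - G q))\<bar> \<le> 2 * V * lc * (q - p)^2"
proof -
  have I: "((\<lambda>s. (v s - W) * (G s - G q)) has_integral integral {p..q} (\<lambda>s. (v s - W) * (G s - G q))) {p..q}"
    using deviation_int[OF assms(1,3)] by (simp add: integrable_integral)
  have "norm (integral {p..q} (\<lambda>s. (v s - W) * (G s - G q)))
      \<le> (2 * V * (lc * (q - p))) * Henstock_Kurzweil_Integration.content {p..q}"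
  proof (rule has_integral_bound_real[OF _ finite.emptyI I])
    show "0 \<le> 2 * V * (lc * (q - p))" using V_nonneg lc assms by simp
    fix s assume s: "s \<in> {p..q} - {}"
    have "\<bar>v s - W\<bar> \<le> 2 * V" using v_bd[of s] W_bound s assms by auto
    moreover have "\<bar>G s - G q\<bar> \<le> lc * (q - p)"
    proof -
      have "\<bar>G s - G q\<bar> \<le> lc * \<bar>s - q\<bar>" using G_lip[of s q] s assms by auto
      also have "\<dots> \<le> lc * (q - p)" using s lc by (intro mult_left_mono) auto
      finally show ?thesis .
    qed
    ultimately show "norm ((v s - W) * (G s - G q)) \<le> 2 * V * (lc * (q - p))"
      by (simp add: abs_mult mult_mono)
  qed
  then show ?thesis using assms by (simp add: power2_eq_square)
qed

definition node :: "nat \<Rightarrow> nat \<Rightarrow> real" where "node N j = a + real j * ((b - a) / real N)"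

lemma node_ends: "N \<ge> 1 \<Longrightarrow> node N 0 = a" "N \<ge> 1 \<Longrightarrow> node N N = b"
  unfolding node_def by simp_all

lemma node_Suc: "node N (Suc j) = node N j + (b - a) / real N"
  unfolding node_def by (simp add: distrib_right add_divide_distrib)

lemma node_bounds:
  assumes "N \<ge> 1" "j \<le> N"
  shows "a \<le> node N j" "node N j \<le> b"
proof -
  have "real j * ((b - a) / real N) \<le> real N * ((b - a) / real N)"
    using assms ab by (intro mult_right_mono) auto
  then show "a \<le> node N j" "node N j \<le> b" unfolding node_def using assms ab by auto
qed

lemma partition_split:
  assumes N: "N \<ge> 1"
  shows "integral {a..b} (\<lambda>s. (v s - W) * G s)
           = (\<Sum>j<N. G (node N (Suc j)) * (\<Phi> (node N (Suc j)) - \<Phi> (node N j)))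
             + (\<Sum>j<N. integral {node N j..node N (Suc j)} (\<lambda>s. (v s - W) * (G s - G (node N (Suc j)))))"
proof -
  define F where "F s = (v s - W) * G s" for s
  have F_int: "F integrable_on {a..q}" if "q \<le> b" for q
    using deviation_int[of a q 0] that unfolding F_def by simp
  have "integral {a..b} F = integral {a..node N N} F - integral {a..node N 0} F"
    using node_ends[OF N] by simp
  also have "\<dots> = (\<Sum>j<N. integral {a..node N (Suc j)} F - integral {a..node N j} F)"
    by (rule sum_lessThan_telescope[symmetric])
  also have "\<dots> = (\<Sum>j<N. G (node N (Suc j)) * (\<Phi> (node N (Suc j)) - \<Phi> (node N j))
      + integral {node N j..node N (Suc j)} (\<lambda>s. (v s - W) * (G s - G (node N (Suc j)))))"
  proof (rule sum.cong[OF refl])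
    fix j assume "j \<in> {..<N}"
    then have j: "a \<le> node N j" "node N j \<le> node N (Suc j)" "node N (Suc j) \<le> b"
      using node_bounds[OF N, of j] node_bounds[OF N, of "Suc j"] node_Suc[of N j] ab by auto
    have "integral {a..node N j} F + integral {node N j..node N (Suc j)} F = integral {a..node N (Suc j)} F"
      using Henstock_Kurzweil_Integration.integral_combine[OF j(1,2) F_int[OF j(3)]] .
    then show "integral {a..node N (Suc j)} F - integral {a..node N j} F
        = G (node N (Suc j)) * (\<Phi> (node N (Suc j)) - \<Phi> (node N j))
          + integral {node N j..node N (Suc j)} (\<lambda>s. (v s - W) * (G s - G (node N (Suc j))))"
      using piece_split[OF j] unfolding F_def by simp
  qed
  finally show ?thesis unfolding F_def by (simp add: sum.distrib)
qed

text \<open>On the uniform partition, \<Phi> at the nodes vanishes at both ends and is bounded by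
  \<open>2 * V * \<delta> / N * j * (N - j)\<close>, while G moves by at most \<open>lc * \<delta>\<close> between nodes, where
  \<open>\<delta> = (b - a) / N\<close>; summation by parts then gives the constant 1/3.\<close>
lemma partition_stieltjes_bound:
  assumes N: "N \<ge> 1"
  shows "\<bar>\<Sum>j<N. G (node N (Suc j)) * (\<Phi> (node N (Suc j)) - \<Phi> (node N j))\<bar> \<le> V * lc * (b - a)^2 / 3"
proof -
  define \<delta> where "\<delta> = (b - a) / real N"
  have \<delta>: "\<delta> > 0" unfolding \<delta>_def using ab N by simp
  have "\<bar>\<Sum>j<N. G (node N (Suc j)) * (\<Phi> (node N (Suc j)) - \<Phi> (node N j))\<bar>
      \<le> (2 * V * \<delta> / real N) * (lc * \<delta>) * real N ^ 3 / 6"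
  proof (rule summation_by_parts_bound[where \<gamma> = "\<lambda>j. G (node N j)" and \<phi> = "\<lambda>j. \<Phi> (node N j)"])
    show "\<Phi> (node N 0) = 0" "\<Phi> (node N N) = 0" using \<Phi>_ends node_ends[OF N] by simp_all
    show "\<bar>\<Phi> (node N j)\<bar> \<le> 2 * V * \<delta> / real N * real j * (real N - real j)" if "j \<le> N" for j
    proof -
      have "node N j - a = real j * \<delta>" "b - node N j = (real N - real j) * \<delta>" "b - a = real N * \<delta>"
        unfolding node_def \<delta>_def using N by (simp_all add: field_simps)
      then have "2 * V * (node N j - a) * (b - node N j) / (b - a)
          = 2 * V * (real j * \<delta>) * ((real N - real j) * \<delta>) / (real N * \<delta>)" by simp
      also have "\<dots> = 2 * V * \<delta> / real N * real j * (real N - real j)"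
        using \<delta> N by (simp add: field_simps)
      finally show ?thesis using \<Phi>_bound[OF node_bounds[OF N that]] by simp
    qed
    show "\<bar>G (node N (Suc j)) - G (node N (Suc (Suc j)))\<bar> \<le> lc * \<delta>" if "Suc j < N" for j
      using G_lip[of "node N (Suc j)" "node N (Suc (Suc j))"] that \<delta> node_Suc[of N "Suc j"]
        node_bounds[OF N, of "Suc j"] node_bounds[OF N, of "Suc (Suc j)"] unfolding \<delta>_def by simp
    show "0 \<le> 2 * V * \<delta> / real N" "0 \<le> lc * \<delta>" using V_nonneg lc \<delta> by simp_all
  qed
  also have "\<dots> = V * lc * (b - a)^2 / 3"
    unfolding \<delta>_def using N by (simp add: power2_eq_square power3_eq_cube field_simps)
  finally show ?thesis .
qed

lemma partition_remainder_bound: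
  assumes N: "N \<ge> 1"
  shows "\<bar>\<Sum>j<N. integral {node N j..node N (Suc j)} (\<lambda>s. (v s - W) * (G s - G (node N (Suc j))))\<bar>
           \<le> 2 * V * lc * (b - a)^2 / real N"
proof -
  define \<delta> where "\<delta> = (b - a) / real N"
  have \<delta>: "\<delta> > 0" unfolding \<delta>_def using ab N by simp
  have "\<bar>integral {node N j..node N (Suc j)} (\<lambda>s. (v s - W) * (G s - G (node N (Suc j))))\<bar>
      \<le> 2 * V * lc * \<delta>^2" if "j < N" for j
    using piece_remainder_bound[of "node N j" "node N (Suc j)"] node_Suc[of N j]
      node_bounds[OF N, of j] node_bounds[OF N, of "Suc j"] that \<delta> unfolding \<delta>_def by simp
  then have "\<bar>\<Sum>j<N. integral {node N j..node N (Suc j)} (\<lambda>s. (v s - W) * (G s - G (node N (Suc j))))\<bar>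
      \<le> (\<Sum>j<N. 2 * V * lc * \<delta>^2)"
    by (intro order_trans[OF sum_abs sum_mono]) auto
  also have "\<dots> = 2 * V * lc * (b - a)^2 / real N"
    unfolding \<delta>_def using N by (simp add: power2_eq_square field_simps)
  finally show ?thesis .
qed

lemma partition_bound:
  assumes "N \<ge> 1"
  shows "\<bar>integral {a..b} (\<lambda>s. (v s - W) * G s)\<bar>
           \<le> V * lc * (b - a)^2 / 3 + 2 * V * lc * (b - a)^2 / real N"
  unfolding partition_split[OF assms]
  using partition_stieltjes_bound[OF assms] partition_remainder_bound[OF assms]
  by (smt (verit) abs_triangle_ineq)

theorem deviation_bound:
  "\<bar>integral {a..b} (\<lambda>s. (v s - W) * G s)\<bar> \<le> V * lc * (b - a)^2 / 3"
  using partition_bound by (rule le_of_le_plus_over_nat)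

end

lemma dini_estimate_from_lognorm:
  fixes z a b rc rb :: "real \<Rightarrow> real^'n" and F :: "real^'n \<Rightarrow> real^'n" and DF :: "real^'n \<Rightarrow> real^'n^'n"
  assumes prim: "primitive_on z (\<lambda>s. F (a s) - F (b s) + rc s + rb s) t0 t1"
    and der: "\<And>w. (F has_derivative (\<lambda>u. DF w *v u)) (at w)"
    and cvx: "convex B" and ab_in: "\<And>s. s \<in> {t0..t1} \<Longrightarrow> a s \<in> B \<and> b s \<in> B"
    and bd: "\<And>w. w \<in> B \<Longrightarrow> matnorm (DF w) \<le> M"
    and lg: "\<And>w. w \<in> B \<Longrightarrow> lognorm (DF w) \<le> \<Lambda>"
    and cont: "continuous_on {t0..t1} (\<lambda>s. F (a s) - F (b s) + rc s)"
    and rb_bd: "\<And>s. s \<in> {t0..t1} \<Longrightarrow> infnorm (rb s) \<le> \<rho>"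
    and \<beta>: "M * infnorm (a t - b t - z t) + infnorm (rc t) + \<rho> \<le> \<beta>"
    and t: "t \<in> {t0..<t1}" and \<epsilon>: "\<epsilon> > 0"
  shows "\<exists>\<eta>>0. \<forall>\<delta>. 0 < \<delta> \<longrightarrow> \<delta> < \<eta> \<longrightarrow> t + \<delta> \<le> t1 \<longrightarrow>
           infnorm (z (t + \<delta>)) \<le> infnorm (z t) + \<delta> * (\<Lambda> * infnorm (z t) + \<beta> + \<epsilon>)"
proof -
  define C where "C s = F (a s) - F (b s) + rc s" for s
  have t_in: "t \<in> {t0..t1}" using t by auto
  obtain d where d: "d > 0" "\<And>s. s \<in> {t0..t1} \<Longrightarrow> dist s t < d \<Longrightarrow> dist (C s) (C t) < \<epsilon>"
    using cont t_in \<epsilon> unfolding continuous_on_iff C_def by metis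
  have M: "0 \<le> M" using bd ab_in[OF t_in] matnorm_nonneg order_trans by blast
  define \<eta> where "\<eta> = min d (1 / (M + 1))"
  show ?thesis
  proof (intro exI[of _ \<eta>] conjI allI impI)
    show "\<eta> > 0" unfolding \<eta>_def using d M by simp
    fix \<delta> assume \<delta>: "0 < \<delta>" "\<delta> < \<eta>" "t + \<delta> \<le> t1"
    have \<delta>M: "\<delta> * M \<le> 1"
    proof -
      have "\<delta> * (M + 1) < 1" using \<delta> M unfolding \<eta>_def by (simp add: field_simps)
      then show ?thesis using \<delta>(1) by (simp add: algebra_simps)
    qed
    have "infnorm (F (a s) - F (b s) + rc s + rb s - C t) \<le> \<epsilon> + \<rho>" if s: "s \<in> {t..t+\<delta>}" for s
    proof -
      have "s \<in> {t0..t1}" "dist s t < d" using s t \<delta> unfolding \<eta>_def by (auto simp: dist_real_def)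
      then have "norm (C s - C t) < \<epsilon>" using d(2) by (simp add: dist_norm)
      then have "infnorm (C s - C t) \<le> \<epsilon>" using infnorm_le_norm[of "C s - C t"] by simp
      then show ?thesis using rb_bd[OF \<open>s \<in> {t0..t1}\<close>] infnorm_triangle[of "C s - C t" "rb s"]
        unfolding C_def by (simp add: algebra_simps)
    qed
    then have "infnorm (z (t + \<delta>)) \<le> infnorm (z t + \<delta> *\<^sub>R C t) + (\<epsilon> + \<rho>) * \<delta>"
      using t \<delta> by (intro primitive_on_euler_step[OF prim]) auto
    also have "infnorm (z t + \<delta> *\<^sub>R C t)
        \<le> infnorm (z t + \<delta> *\<^sub>R (F (a t) - F (b t))) + \<delta> * infnorm (rc t)"
      using infnorm_triangle[of "z t + \<delta> *\<^sub>R (F (a t) - F (b t))" "\<delta> *\<^sub>R rc t"] \<delta>(1)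
      unfolding C_def by (simp add: infnorm_mul scaleR_add_right add.assoc)
    also have "infnorm (z t + \<delta> *\<^sub>R (F (a t) - F (b t)))
        \<le> (1 + \<delta> * \<Lambda>) * infnorm (z t) + \<delta> * M * infnorm (a t - b t - z t)"
      using ab_in[OF t_in] \<delta>(1) \<delta>M by (intro one_sided_estimate_from_lognorm[OF der cvx _ _ bd lg]) auto
    finally have "infnorm (z (t + \<delta>))
        \<le> infnorm (z t) + \<delta> * (\<Lambda> * infnorm (z t) + (M * infnorm (a t - b t - z t) + infnorm (rc t) + \<rho>) + \<epsilon>)"
      by (simp add: algebra_simps)
    also have "\<dots> \<le> infnorm (z t) + \<delta> * (\<Lambda> * infnorm (z t) + \<beta> + \<epsilon>)"
      using \<beta> \<delta>(1) by (simp add: mult_left_mono)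
    finally show "infnorm (z (t + \<delta>)) \<le> infnorm (z t) + \<delta> * (\<Lambda> * infnorm (z t) + \<beta> + \<epsilon>)" .
  qed
qed

lemma bounded_measurable_absolutely_integrable:
  fixes v :: "real \<Rightarrow> real"
  assumes "v \<in> borel_measurable lebesgue" "\<And>t. \<bar>v t\<bar> \<le> V"
  shows "v absolutely_integrable_on {p..q}"
proof (rule measurable_bounded_by_integrable_imp_absolutely_integrable[of _ _ "\<lambda>_. V"])
  show "v \<in> borel_measurable (lebesgue_on {p..q})" using assms(1) by (rule measurable_restrict_space1)
qed (use assms(2) in auto)

lemma absolutely_integrable_times_continuous:
  fixes v G :: "real \<Rightarrow> real"
  assumes "v absolutely_integrable_on {p..q}" "continuous_on {p..q} G"
  shows "(\<lambda>s. v s * G s) integrable_on {p..q}"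
proof -
  have "G \<in> borel_measurable (lebesgue_on {p..q})"
    using assms(2) by (rule continuous_imp_measurable_on_sets_lebesgue) auto
  moreover have "bounded (G ` {p..q})"
    using compact_continuous_image[OF assms(2)] compact_imp_bounded by blast
  ultimately have "(\<lambda>s. G s * v s) absolutely_integrable_on {p..q}"
    using absolutely_integrable_bounded_measurable_product_real[of G "{p..q}" v] assms(1) by auto
  then show ?thesis using set_lebesgue_integral_eq_integral(1) by (simp add: mult.commute)
qed

locale averaged_control_step =
  fixes f :: "real^'n \<Rightarrow> real^'n" and Df :: "real^'n \<Rightarrow> real^'n^'n"
    and g :: "nat \<Rightarrow> real^'n \<Rightarrow> real^'n" and Dg :: "nat \<Rightarrow> real^'n \<Rightarrow> real^'n^'n"
    and m :: nat and v :: "nat \<Rightarrow> real \<Rightarrow> real" and V Ki Li :: "nat \<Rightarrow> real"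
    and x y :: "real \<Rightarrow> real^'n" and tk tk1 K L \<Lambda> :: real and B :: "(real^'n) set"
  assumes step: "tk < tk1"
    and f_der: "\<And>z. (f has_derivative (\<lambda>u. Df z *v u)) (at z)"
    and g_der: "\<And>i z. i < m \<Longrightarrow> (g i has_derivative (\<lambda>u. Dg i z *v u)) (at z)"
    and v_meas: "\<And>i. i < m \<Longrightarrow> v i \<in> borel_measurable lebesgue"
    and v_bd: "\<And>i t. i < m \<Longrightarrow> \<bar>v i t\<bar> \<le> V i"
    and x_sol: "\<And>t. t \<in> {tk..tk1} \<Longrightarrow>
        ((\<lambda>s. f (x s) + (\<Sum>i<m. v i s *\<^sub>R g i (x s))) has_integral (x t - x tk)) {tk..t}"
    and y_sol: "\<And>t. t \<in> {tk..tk1} \<Longrightarrow>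
        (y has_vector_derivative
           (f (y t) + (\<Sum>i<m. (integral {tk..tk1} (v i) / (tk1 - tk)) *\<^sub>R g i (y t))))
        (at t within {tk..tk1})"
    and y_init: "y tk = x tk"
    and B_convex: "convex B"
    and xB: "\<And>t. t \<in> {tk..tk1} \<Longrightarrow> x t \<in> B"
    and yB: "\<And>t. t \<in> {tk..tk1} \<Longrightarrow> y t \<in> B"
    and f_bd: "\<And>z. z \<in> B \<Longrightarrow> infnorm (f z) \<le> K"
    and g_bd: "\<And>i z. i < m \<Longrightarrow> z \<in> B \<Longrightarrow> infnorm (g i z) \<le> Ki i"
    and Df_bd: "\<And>z. z \<in> B \<Longrightarrow> matnorm (Df z) \<le> L"
    and Dg_bd: "\<And>i z. i < m \<Longrightarrow> z \<in> B \<Longrightarrow> matnorm (Dg i z) \<le> Li i"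
    and Df_log: "\<And>z. z \<in> B \<Longrightarrow> lognorm (Df z) \<le> \<Lambda>"
    and Lam: "\<Lambda> \<noteq> 0"
begin

definition W :: "nat \<Rightarrow> real" where "W i = mean tk tk1 (v i)"
definition K' :: real where "K' = (\<Sum>i<m. V i * Ki i)"
definition L' :: real where "L' = (\<Sum>i<m. V i * Li i)"
definition Fx :: "real \<Rightarrow> real^'n" where "Fx s = f (x s) + (\<Sum>i<m. v i s *\<^sub>R g i (x s))"
definition Fa :: "real \<Rightarrow> real^'n" where "Fa s = f (x s) + (\<Sum>i<m. W i *\<^sub>R g i (x s))"
definition Fy :: "real \<Rightarrow> real^'n" where "Fy s = f (y s) + (\<Sum>i<m. W i *\<^sub>R g i (y s))"

text \<open>The curve xa solves the averaged system along the exact trajectory; the step error splits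
  as \<open>x - y = (xa - y) + (x - xa)\<close>.\<close>
definition xa :: "real \<Rightarrow> real^'n" where "xa t = x tk + integral {tk..t} Fa"

lemma bounds_nonneg: "0 \<le> K" "0 \<le> L" "i < m \<Longrightarrow> 0 \<le> Ki i" "i < m \<Longrightarrow> 0 \<le> Li i" "i < m \<Longrightarrow> 0 \<le> V i"
proof -
  have xB0: "x tk \<in> B" using xB step by auto
  show "0 \<le> K" using order_trans[OF infnorm_pos_le f_bd[OF xB0]] .
  show "0 \<le> L" using order_trans[OF matnorm_nonneg Df_bd[OF xB0]] .
  show "i < m \<Longrightarrow> 0 \<le> Ki i" using order_trans[OF infnorm_pos_le g_bd[OF _ xB0]] .
  show "i < m \<Longrightarrow> 0 \<le> Li i" using order_trans[OF matnorm_nonneg Dg_bd[OF _ xB0]] .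
  show "i < m \<Longrightarrow> 0 \<le> V i" using v_bd[of i tk] by auto
qed

lemma K'_nonneg: "0 \<le> K'"
  unfolding K'_def using bounds_nonneg by (intro sum_nonneg mult_nonneg_nonneg) auto

lemma L'_nonneg: "0 \<le> L'"
  unfolding L'_def using bounds_nonneg by (intro sum_nonneg mult_nonneg_nonneg) auto

lemma v_abs_int: "i < m \<Longrightarrow> v i absolutely_integrable_on {p..q}"
  by (rule bounded_measurable_absolutely_integrable[OF v_meas v_bd])

lemma v_int: "i < m \<Longrightarrow> v i integrable_on {p..q}"
  using v_abs_int set_lebesgue_integral_eq_integral(1) by blast

lemma W_bound: "i < m \<Longrightarrow> \<bar>W i\<bar> \<le> V i"
  unfolding W_def using step v_int v_bd by (intro mean_abs_bound) auto

lemma control_sum_bound: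
  assumes "\<And>i. i < m \<Longrightarrow> \<bar>c i\<bar> \<le> V i" "z \<in> B"
  shows "infnorm (\<Sum>i<m. c i *\<^sub>R g i z) \<le> K'"
  unfolding K'_def using assms g_bd by (intro infnorm_sum_scaleR_le) auto

lemma field_bound:
  assumes "\<And>i. i < m \<Longrightarrow> \<bar>c i\<bar> \<le> V i" "z \<in> B"
  shows "infnorm (f z + (\<Sum>i<m. c i *\<^sub>R g i z)) \<le> K + K'"
proof -
  have "infnorm (\<Sum>i<m. c i *\<^sub>R g i z) \<le> K'" using assms by (rule control_sum_bound)
  then show ?thesis using infnorm_triangle[of "f z" "\<Sum>i<m. c i *\<^sub>R g i z"] f_bd[OF assms(2)] by linarith
qed

lemma Fx_bound: "s \<in> {tk..tk1} \<Longrightarrow> infnorm (Fx s) \<le> K + K'"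
  unfolding Fx_def by (rule field_bound) (auto intro: v_bd xB)

lemma Fy_bound: "s \<in> {tk..tk1} \<Longrightarrow> infnorm (Fy s) \<le> K + K'"
  unfolding Fy_def by (rule field_bound) (auto intro: W_bound yB)

lemma x_primitive: "primitive_on x Fx tk tk1"
  unfolding Fx_def by (rule primitive_onI_from_start) (rule x_sol)

lemma y_primitive: "primitive_on y Fy tk tk1"
  unfolding Fy_def W_def mean_def by (rule primitive_onI_from_derivative) (rule y_sol)

lemma x_lipschitz: "p \<in> {tk..tk1} \<Longrightarrow> q \<in> {tk..tk1} \<Longrightarrow> infnorm (x q - x p) \<le> (K + K') * \<bar>q - p\<bar>"
  by (rule primitive_on_lipschitz[OF x_primitive Fx_bound])

lemma x_cont: "continuous_on {tk..tk1} x"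
  by (rule primitive_on_continuous[OF x_primitive Fx_bound])

lemma y_cont: "continuous_on {tk..tk1} y"
  by (rule primitive_on_continuous[OF y_primitive Fy_bound])

lemma f_cont: "continuous_on UNIV f"
  using has_derivative_continuous[OF f_der] by (simp add: continuous_at_imp_continuous_on)

lemma g_cont: "i < m \<Longrightarrow> continuous_on UNIV (g i)"
  using has_derivative_continuous[OF g_der] by (simp add: continuous_at_imp_continuous_on)

lemma along_cont:
  assumes "continuous_on UNIV F" "continuous_on {tk..tk1} z"
  shows "continuous_on {tk..tk1} (\<lambda>s. F (z s))"
  using continuous_on_compose2[OF assms(1) assms(2)] by auto

lemma Fa_cont: "continuous_on {tk..tk1} Fa"
proof -
  have "continuous_on {tk..tk1} (\<lambda>s. g i (x s))" if "i < m" for i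
    by (rule along_cont[OF g_cont[OF that] x_cont])
  then show ?thesis unfolding Fa_def
    by (intro continuous_on_add along_cont[OF f_cont x_cont] continuous_on_sum continuous_on_scaleR
        continuous_on_const) auto
qed

lemma xa_primitive: "primitive_on xa Fa tk tk1"
  unfolding xa_def using Fa_cont by (rule primitive_on_integral)

lemma xa_start: "xa tk = x tk"
  unfolding xa_def by simp

lemma Fa_bound: "s \<in> {tk..tk1} \<Longrightarrow> infnorm (Fa s) \<le> K + K'"
  unfolding Fa_def by (rule field_bound) (auto intro: W_bound xB)

lemma xa_cont: "continuous_on {tk..tk1} xa"
  by (rule primitive_on_continuous[OF xa_primitive Fa_bound])

lemma control_deviation_bound: "i < m \<Longrightarrow> \<bar>v i s - W i\<bar> \<le> 2 * V i"
  using v_bd[of i s] W_bound[of i] by auto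

lemma remainder_primitive:
  "primitive_on (\<lambda>t. x t - xa t) (\<lambda>s. \<Sum>i<m. (v i s - W i) *\<^sub>R g i (x s)) tk tk1"
  by (rule primitive_on_cong[OF primitive_on_diff[OF x_primitive xa_primitive]])
     (simp add: Fx_def Fa_def scaleR_diff_left sum_subtractf)

lemma remainder_linear_bound:
  assumes "t \<in> {tk..tk1}"
  shows "infnorm (x t - xa t) \<le> 2 * K' * (t - tk)"
proof -
  have "infnorm (\<Sum>i<m. (v i s - W i) *\<^sub>R g i (x s)) \<le> 2 * K'" if "s \<in> {tk..tk1}" for s
  proof -
    have "infnorm (\<Sum>i<m. (v i s - W i) *\<^sub>R g i (x s)) \<le> (\<Sum>i<m. (2 * V i) * Ki i)"
      using control_deviation_bound g_bd xB[OF that] by (intro infnorm_sum_scaleR_le) auto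
    then show ?thesis unfolding K'_def by (simp add: sum_distrib_left mult.assoc)
  qed
  from primitive_on_lipschitz[OF remainder_primitive this, of tk t] step assms
  show ?thesis by (simp add: xa_start)
qed

definition \<phi> :: "real \<Rightarrow> real" where "\<phi> s = (exp (\<Lambda> * s) - 1) / \<Lambda>"

lemma \<phi>_nonneg: "0 \<le> s \<Longrightarrow> 0 \<le> \<phi> s"
  unfolding \<phi>_def using Lam
  by (cases "\<Lambda> > 0") (auto simp: divide_nonpos_neg mult_nonpos_nonneg)

lemma \<Lambda>_\<phi>: "\<Lambda> * \<phi> s = exp (\<Lambda> * s) - 1"
  unfolding \<phi>_def using Lam by simp

lemma \<phi>_deriv: "((\<lambda>t. \<phi> (t - tk)) has_real_derivative exp (\<Lambda> * (t - tk))) (at t within S)"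
  unfolding \<phi>_def using Lam by (auto intro!: derivative_eq_intros)

lemma control_difference_bound:
  assumes "s \<in> {tk..tk1}"
  shows "infnorm ((\<Sum>i<m. v i s *\<^sub>R g i (x s)) - (\<Sum>i<m. W i *\<^sub>R g i (y s))) \<le> 2 * K'"
proof -
  have "infnorm (\<Sum>i<m. v i s *\<^sub>R g i (x s)) \<le> K'"
    using v_bd xB[OF assms] by (intro control_sum_bound) auto
  moreover have "infnorm (\<Sum>i<m. W i *\<^sub>R g i (y s)) \<le> K'"
    using W_bound yB[OF assms] by (intro control_sum_bound) auto
  ultimately show ?thesis
    using infnorm_diff_le[of "\<Sum>i<m. v i s *\<^sub>R g i (x s)" "\<Sum>i<m. W i *\<^sub>R g i (y s)"] by linarith
qed

lemma trajectories_in_B: "s \<in> {tk..tk1} \<Longrightarrow> x s \<in> B \<and> y s \<in> B"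
  using xB yB by blast

text \<open>The max norm of x - y has upper right Dini derivative at most \<open>\<Lambda> * |x - y| + 2 * K'\<close>:
  the drift difference is handled by the one-sided estimate, the control terms are bounded.\<close>
lemma trajectory_dini:
  assumes "t \<in> {tk..<tk1}" "\<epsilon> > 0"
  shows "\<exists>\<eta>>0. \<forall>\<delta>. 0 < \<delta> \<longrightarrow> \<delta> < \<eta> \<longrightarrow> t + \<delta> \<le> tk1 \<longrightarrow>
           infnorm (x (t + \<delta>) - y (t + \<delta>)) \<le> infnorm (x t - y t) + \<delta> * (\<Lambda> * infnorm (x t - y t) + 2 * K' + \<epsilon>)"
proof (rule dini_estimate_from_lognorm[where z = "\<lambda>t. x t - y t" and F = f and a = x and b = y
      and rc = "\<lambda>_. 0" and rb = "\<lambda>s. (\<Sum>i<m. v i s *\<^sub>R g i (x s)) - (\<Sum>i<m. W i *\<^sub>R g i (y s))"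
      and \<rho> = "2 * K'" and \<beta> = "2 * K'" and M = L,
      OF _ f_der B_convex trajectories_in_B Df_bd Df_log _ control_difference_bound _ assms])
  show "primitive_on (\<lambda>t. x t - y t)
      (\<lambda>s. f (x s) - f (y s) + 0 + ((\<Sum>i<m. v i s *\<^sub>R g i (x s)) - (\<Sum>i<m. W i *\<^sub>R g i (y s)))) tk tk1"
    by (rule primitive_on_cong[OF primitive_on_diff[OF x_primitive y_primitive]])
       (simp add: Fx_def Fy_def)
  show "continuous_on {tk..tk1} (\<lambda>s. f (x s) - f (y s) + 0)"
    by (intro continuous_on_add continuous_on_diff along_cont[OF f_cont x_cont]
        along_cont[OF f_cont y_cont] continuous_on_const)
  show "L * infnorm (x t - y t - (x t - y t)) + infnorm (0::real^'n) + 2 * K' \<le> 2 * K'"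
    by (simp add: infnorm_0)
qed

lemma trajectory_error_bound:
  assumes "t \<in> {tk..tk1}"
  shows "infnorm (x t - y t) \<le> 2 * K' * \<phi> (t - tk)"
proof (rule dini_comparison[where N = "\<lambda>t. infnorm (x t - y t)" and \<psi> = "\<lambda>t. 2 * K' * \<phi> (t - tk)"
      and \<psi>' = "\<lambda>t. 2 * K' * exp (\<Lambda> * (t - tk))" and \<beta> = "\<lambda>_. 2 * K'" and \<Lambda> = \<Lambda>,
      OF _ _ _ _ trajectory_dini assms])
  show "continuous_on {tk..tk1} (\<lambda>t. infnorm (x t - y t))"
    by (intro continuous_on_infnorm continuous_on_diff x_cont y_cont)
  show "((\<lambda>t. 2 * K' * \<phi> (t - tk)) has_real_derivative 2 * K' * exp (\<Lambda> * (t - tk))) (at t within {tk..tk1})" for t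
    by (rule DERIV_cmult[OF \<phi>_deriv])
  show "\<Lambda> * (2 * K' * \<phi> (t - tk)) + 2 * K' \<le> 2 * K' * exp (\<Lambda> * (t - tk))" for t
  proof -
    have "\<Lambda> * (2 * K' * \<phi> (t - tk)) + 2 * K' = 2 * K' * (\<Lambda> * \<phi> (t - tk) + 1)"
      by (simp add: algebra_simps)
    then show ?thesis using \<Lambda>_\<phi>[of "t - tk"] by simp
  qed
  show "infnorm (x tk - y tk) \<le> 2 * K' * \<phi> (tk - tk)" by (simp add: y_init infnorm_0 \<phi>_def)
qed

lemma averaged_increment_bound:
  assumes "s \<in> {tk..tk1}"
  shows "infnorm (\<Sum>i<m. W i *\<^sub>R (g i (x s) - g i (y s))) \<le> L' * infnorm (x s - y s)"
proof -
  have "infnorm (\<Sum>i<m. W i *\<^sub>R (g i (x s) - g i (y s))) \<le> (\<Sum>i<m. V i * (Li i * infnorm (x s - y s)))"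
    using W_bound xB[OF assms] yB[OF assms]
    by (intro infnorm_sum_scaleR_le lipschitz_from_matnorm[OF g_der B_convex _ _ Dg_bd]) auto
  then show ?thesis unfolding L'_def by (simp add: sum_distrib_right mult.assoc)
qed

text \<open>The max norm of xa - y has upper right Dini derivative at most \<open>\<Lambda> * |xa - y|\<close> plus
  \<open>L * |x - xa| + L' * |x - y|\<close>: along x the averaged field differs from the field along y by
  a drift difference, handled by the one-sided estimate with defect x - xa, and by control
  terms that are Lipschitz in x - y.\<close>
lemma averaged_dini:
  assumes t: "t \<in> {tk..<tk1}" and "\<epsilon> > 0"
  shows "\<exists>\<eta>>0. \<forall>\<delta>. 0 < \<delta> \<longrightarrow> \<delta> < \<eta> \<longrightarrow> t + \<delta> \<le> tk1 \<longrightarrow>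
           infnorm (xa (t + \<delta>) - y (t + \<delta>)) \<le> infnorm (xa t - y t)
             + \<delta> * (\<Lambda> * infnorm (xa t - y t) + (2 * K' * L * (t - tk) + L' * (2 * K' * \<phi> (t - tk))) + \<epsilon>)"
proof -
  define rc where "rc s = (\<Sum>i<m. W i *\<^sub>R (g i (x s) - g i (y s)))" for s
  have t_in: "t \<in> {tk..tk1}" using t by auto
  have g_along: "continuous_on {tk..tk1} (\<lambda>s. g i (z s))" if "i < m" "continuous_on {tk..tk1} z" for i z
    by (rule along_cont[OF g_cont[OF that(1)] that(2)])
  show ?thesis
  proof (rule dini_estimate_from_lognorm[where z = "\<lambda>t. xa t - y t" and F = f and a = x and b = y
        and rc = rc and rb = "\<lambda>_. 0" and \<rho> = 0 and M = L,
        OF _ f_der B_convex trajectories_in_B Df_bd Df_log _ _ _ assms])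
    show "primitive_on (\<lambda>t. xa t - y t) (\<lambda>s. f (x s) - f (y s) + rc s + 0) tk tk1"
      by (rule primitive_on_cong[OF primitive_on_diff[OF xa_primitive y_primitive]])
         (simp add: Fa_def Fy_def rc_def scaleR_diff_right sum_subtractf)
    show "continuous_on {tk..tk1} (\<lambda>s. f (x s) - f (y s) + rc s)"
      unfolding rc_def using g_along x_cont y_cont
      by (intro continuous_on_add continuous_on_diff along_cont[OF f_cont x_cont]
          along_cont[OF f_cont y_cont] continuous_on_sum continuous_on_scaleR continuous_on_const) auto
    show "infnorm (0::real^'n) \<le> 0" by (simp add: infnorm_0)
    have "L * infnorm (x t - y t - (xa t - y t)) \<le> 2 * K' * L * (t - tk)"
      using mult_left_mono[OF remainder_linear_bound[OF t_in] bounds_nonneg(2)] by (simp add: algebra_simps)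
    moreover have "infnorm (rc t) \<le> L' * (2 * K' * \<phi> (t - tk))"
      using order_trans[OF averaged_increment_bound[OF t_in]
          mult_left_mono[OF trajectory_error_bound[OF t_in] L'_nonneg]]
      unfolding rc_def .
    ultimately show "L * infnorm (x t - y t - (xa t - y t)) + infnorm (rc t) + 0
        \<le> 2 * K' * L * (t - tk) + L' * (2 * K' * \<phi> (t - tk))" by linarith
  qed
qed

lemma averaged_supersolution:
  assumes "t \<in> {tk..tk1}"
  shows "\<Lambda> * (2 * K' * (L + L') * ((t - tk) * \<phi> (t - tk))) + (2 * K' * L * (t - tk) + L' * (2 * K' * \<phi> (t - tk)))
           \<le> 2 * K' * (L + L') * (\<phi> (t - tk) + (t - tk) * exp (\<Lambda> * (t - tk)))"
proof -
  define s where "s = t - tk"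
  have "0 \<le> s" using assms unfolding s_def by auto
  then have "0 \<le> K' * L * \<phi> s" "0 \<le> K' * L' * s"
    using K'_nonneg L'_nonneg bounds_nonneg(2) \<phi>_nonneg by simp_all
  moreover have "\<Lambda> * (2 * K' * (L + L') * (s * \<phi> s)) = 2 * K' * (L + L') * s * (\<Lambda> * \<phi> s)"
    by (simp add: algebra_simps)
  ultimately have "\<Lambda> * (2 * K' * (L + L') * (s * \<phi> s)) = 2 * K' * (L + L') * s * (exp (\<Lambda> * s) - 1)"
    "0 \<le> K' * L * \<phi> s" "0 \<le> K' * L' * s"
    unfolding \<Lambda>_\<phi> by simp_all
  then show ?thesis unfolding s_def[symmetric] by (simp add: algebra_simps)
qed

lemma averaged_error_bound:
  assumes "t \<in> {tk..tk1}"
  shows "infnorm (xa t - y t) \<le> 2 * K' * (L + L') * ((t - tk) * \<phi> (t - tk))"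
proof (rule dini_comparison[where N = "\<lambda>t. infnorm (xa t - y t)"
      and \<psi> = "\<lambda>t. 2 * K' * (L + L') * ((t - tk) * \<phi> (t - tk))"
      and \<psi>' = "\<lambda>t. 2 * K' * (L + L') * (\<phi> (t - tk) + (t - tk) * exp (\<Lambda> * (t - tk)))"
      and \<beta> = "\<lambda>t. 2 * K' * L * (t - tk) + L' * (2 * K' * \<phi> (t - tk))" and \<Lambda> = \<Lambda>,
      OF _ _ averaged_supersolution _ averaged_dini assms])
  show "continuous_on {tk..tk1} (\<lambda>t. infnorm (xa t - y t))"
    by (intro continuous_on_infnorm continuous_on_diff xa_cont y_cont)
  show "((\<lambda>t. 2 * K' * (L + L') * ((t - tk) * \<phi> (t - tk))) has_real_derivative
      2 * K' * (L + L') * (\<phi> (t - tk) + (t - tk) * exp (\<Lambda> * (t - tk)))) (at t within {tk..tk1})" for t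
    by (rule DERIV_cmult) (use \<phi>_deriv[of t] in \<open>auto intro!: derivative_eq_intros\<close>)
  show "infnorm (xa tk - y tk) \<le> 2 * K' * (L + L') * ((tk - tk) * \<phi> (tk - tk))"
    by (simp add: xa_start y_init infnorm_0)
qed

lemma component_mean_deviation:
  assumes "i < m"
  shows "mean_deviation (v i) (\<lambda>s. g i (x s) $ j) tk tk1 (V i) (Li i * (K + K'))"
proof
  show "tk < tk1" by (rule step)
  show "v i integrable_on {tk..tk1}" using assms by (rule v_int)
  show "\<bar>v i s\<bar> \<le> V i" for s using assms by (rule v_bd)
  show "0 \<le> Li i * (K + K')" using bounds_nonneg assms K'_nonneg by simp
  have "continuous_on {tk..tk1} (\<lambda>s. g i (x s) $ j)"
    by (intro continuous_on_component along_cont[OF g_cont[OF assms] x_cont])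
  with v_abs_int[OF assms] show "(\<lambda>s. v i s * g i (x s) $ j) integrable_on {tk..tk1}"
    by (rule absolutely_integrable_times_continuous)
  fix s s' assume s: "s \<in> {tk..tk1}" "s' \<in> {tk..tk1}"
  have "\<bar>g i (x s) $ j - g i (x s') $ j\<bar> \<le> infnorm (g i (x s) - g i (x s'))"
    using component_le_infnorm_cart[of "g i (x s) - g i (x s')" j] by simp
  also have "\<dots> \<le> Li i * infnorm (x s - x s')"
    using s by (intro lipschitz_from_matnorm[OF g_der[OF assms] B_convex xB xB Dg_bd[OF assms]])
  also have "\<dots> \<le> Li i * ((K + K') * \<bar>s - s'\<bar>)"
    using x_lipschitz[OF s(2,1)] bounds_nonneg(4)[OF assms] by (intro mult_left_mono) auto
  finally show "\<bar>g i (x s) $ j - g i (x s') $ j\<bar> \<le> Li i * (K + K') * \<bar>s - s'\<bar>"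
    by (simp add: mult.assoc)
qed

lemma remainder_bound:
  "infnorm (x tk1 - xa tk1) \<le> (K + K') * L' * (tk1 - tk)^2 / 3"
proof (rule infnorm_le_cartI)
  fix j
  define I where "I i = integral {tk..tk1} (\<lambda>s. (v i s - W i) * g i (x s) $ j)" for i
  have dev: "\<bar>I i\<bar> \<le> V i * (Li i * (K + K')) * (tk1 - tk)^2 / 3" if "i < m" for i
    using mean_deviation.deviation_bound[OF component_mean_deviation[OF that, of j]]
    unfolding I_def W_def .
  have "((\<lambda>s. \<Sum>i<m. (v i s - W i) * g i (x s) $ j) has_integral (x tk1 - xa tk1) $ j) {tk..tk1}"
    using has_integral_linear[OF primitive_onD[OF remainder_primitive order_refl _ order_refl]
        bounded_linear_vec_nth[of j]] step
    by (simp add: o_def xa_start)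
  moreover have "((\<lambda>s. \<Sum>i<m. (v i s - W i) * g i (x s) $ j) has_integral (\<Sum>i<m. I i)) {tk..tk1}"
  proof (rule has_integral_sum)
    fix i assume "i \<in> {..<m}"
    then have "mean_deviation (v i) (\<lambda>s. g i (x s) $ j) tk tk1 (V i) (Li i * (K + K'))"
      by (intro component_mean_deviation) auto
    from mean_deviation.deviation_int[OF this order_refl order_refl, of 0]
    show "((\<lambda>s. (v i s - W i) * g i (x s) $ j) has_integral I i) {tk..tk1}"
      unfolding I_def W_def by (simp add: integrable_integral)
  qed simp
  ultimately have "(x tk1 - xa tk1) $ j = (\<Sum>i<m. I i)" by (rule has_integral_unique)
  then have "\<bar>(x tk1 - xa tk1) $ j\<bar> \<le> (\<Sum>i<m. \<bar>I i\<bar>)" by simp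
  also have "\<dots> \<le> (\<Sum>i<m. V i * (Li i * (K + K')) * (tk1 - tk)^2 / 3)"
    using dev by (intro sum_mono) auto
  also have "\<dots> = (K + K') * L' * (tk1 - tk)^2 / 3"
    unfolding L'_def by (simp add: sum_distrib_left sum_divide_distrib algebra_simps)
  finally show "\<bar>(x tk1 - xa tk1) $ j\<bar> \<le> (K + K') * L' * (tk1 - tk)^2 / 3" .
qed

end

theorem mainTheorem3:
  fixes f :: "real^'n \<Rightarrow> real^'n" and Df :: "real^'n \<Rightarrow> real^'n^'n"
    and g :: "nat \<Rightarrow> real^'n \<Rightarrow> real^'n" and Dg :: "nat \<Rightarrow> real^'n \<Rightarrow> real^'n^'n"
    and m :: nat and v :: "nat \<Rightarrow> real \<Rightarrow> real" and V Ki Li :: "nat \<Rightarrow> real"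
    and x y :: "real \<Rightarrow> real^'n" and tk tk1 K L \<Lambda> :: real and B :: "(real^'n) set"
  assumes m: "m \<ge> 1"
    and h: "tk < tk1"
    and f_C1: "\<And>z. (f has_derivative (\<lambda>u. Df z *v u)) (at z)" "continuous_on UNIV Df"
    and g_C1: "\<And>i z. i < m \<Longrightarrow> (g i has_derivative (\<lambda>u. Dg i z *v u)) (at z)"
              "\<And>i. i < m \<Longrightarrow> continuous_on UNIV (Dg i)"
    and v_meas: "\<And>i. i < m \<Longrightarrow> v i \<in> borel_measurable lebesgue"
    and V_pos: "\<And>i. i < m \<Longrightarrow> V i > 0"
    and v_bd: "\<And>i t. i < m \<Longrightarrow> \<bar>v i t\<bar> \<le> V i"
    and x_sol: "\<And>t. t \<in> {tk..tk1} \<Longrightarrow>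
        ((\<lambda>s. f (x s) + (\<Sum>i<m. v i s *\<^sub>R g i (x s))) has_integral (x t - x tk)) {tk..t}"
    and y_sol: "\<And>t. t \<in> {tk..tk1} \<Longrightarrow>
        (y has_vector_derivative
           (f (y t) + (\<Sum>i<m. (integral {tk..tk1} (v i) / (tk1 - tk)) *\<^sub>R g i (y t))))
        (at t within {tk..tk1})"
    and y_init: "y tk = x tk"
    and B_convex: "convex B"
    and xB: "\<And>t. t \<in> {tk..tk1} \<Longrightarrow> x t \<in> B"
    and yB: "\<And>t. t \<in> {tk..tk1} \<Longrightarrow> y t \<in> B"
    and f_bd: "\<And>z. z \<in> B \<Longrightarrow> maxnorm (f z) \<le> K"
    and g_bd: "\<And>i z. i < m \<Longrightarrow> z \<in> B \<Longrightarrow> maxnorm (g i z) \<le> Ki i"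
    and Df_bd: "\<And>z. z \<in> B \<Longrightarrow> matnorm (Df z) \<le> L"
    and Dg_bd: "\<And>i z. i < m \<Longrightarrow> z \<in> B \<Longrightarrow> matnorm (Dg i z) \<le> Li i"
    and Df_log: "\<And>z. z \<in> B \<Longrightarrow> lognorm (Df z) \<le> \<Lambda>"
    and Lam: "\<Lambda> \<noteq> 0"
  shows "maxnorm (x tk1 - y tk1) \<le>
    (tk1 - tk)^2 * (((K + (\<Sum>i<m. V i * Ki i)) * (\<Sum>i<m. V i * Li i)) / 3
      + 2 * (\<Sum>i<m. V i * Ki i) * (L + (\<Sum>i<m. V i * Li i))
          * ((exp (\<Lambda> * (tk1 - tk)) - 1) / (\<Lambda> * (tk1 - tk))))"
proof -
  interpret averaged_control_step f Df g Dg m v V Ki Li x y tk tk1 K L \<Lambda> B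
    by (rule averaged_control_step.intro)
       (fact h f_C1(1) g_C1(1) v_meas v_bd x_sol y_sol y_init B_convex xB yB Df_bd Dg_bd Df_log Lam
          f_bd[unfolded maxnorm_eq_infnorm] g_bd[unfolded maxnorm_eq_infnorm])+
  have "infnorm (x tk1 - y tk1) \<le> infnorm (xa tk1 - y tk1) + infnorm (x tk1 - xa tk1)"
    using infnorm_triangle[of "xa tk1 - y tk1" "x tk1 - xa tk1"] by simp
  also have "\<dots> \<le> 2 * K' * (L + L') * ((tk1 - tk) * \<phi> (tk1 - tk)) + (K + K') * L' * (tk1 - tk)^2 / 3"
    using averaged_error_bound[of tk1] remainder_bound h by simp
  also have "\<dots> = (tk1 - tk)^2 * ((K + K') * L' / 3
      + 2 * K' * (L + L') * ((exp (\<Lambda> * (tk1 - tk)) - 1) / (\<Lambda> * (tk1 - tk))))"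
    unfolding \<phi>_def using Lam h by (simp add: field_simps power2_eq_square)
  finally show ?thesis unfolding maxnorm_eq_infnorm K'_def L'_def .
qed

end
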